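(* Let $G$ be a fullerene graph, $C$ a longest cycle of $G$, and apply the discharging procedure described in the context. If $f=v_1v_2v_3v_4v_5v_6$ is a white face of $G$ such that the edges $v_2v_3$ and $v_5v_6$ are contained in $C$, then the final amount of charge of $f$ is $1$ unit.
   Context: A fullerene graph is a cubic, planar, $3$-connected graph embedded in the plane in which every face has size five or six. Fix a longest cycle $C$ of $G$; vertices on $C$ are black, the others white. Every face of $G$ is incident with at most two white vertices. A face incident with exactly two white vertices is called white; a face incident with no white vertex is called black. For a face $f$ with vertices $v_1,\dots,v_k$ in cyclic order, $f_{i,i+1}$ denotes the face other than $f$ containing the edge $v_iv_{i+1}$ (indices modulo $k$). Discharging: each white vertex receives $3$ units of charge and sends $1$ unit to each of its three incident faces (so each face initially has charge equal to its number of incident white vertices). Then charge is redistributed by two rules, where $f_0=v_1\dots v_6$ is a black face of size six and indices are modulo $6$. Rule A: $f_0$ receives $1/2$ unit from $f_{i,i+1}$ if the path $v_{i-1}v_iv_{i+1}v_{i+2}$ is contained in $C$ and the face $f_{i,i+1}$ is white. Rule B: $f_0$ receives $1$ unit from $f_{i,i+1}$ if the edge $v_iv_{i+1}$ is contained in $C$, neither $v_{i-1}v_i$ nor $v_{i+1}v_{i+2}$ is contained in $C$, and the face $f_{i,i+1}$ is white. The final charge of a face is its initial charge plus all charge received minus all charge sent under Rules A and B. *)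

theory Defs
  imports Complex_Main
begin

text \<open>A graph is given by a vertex set V and a set E of edges, each edge a 2-element set.
  A cycle is represented by the list of its vertices in cyclic order.\<close>

definition cyc_edges :: "'v list \<Rightarrow> 'v set set" where
  "cyc_edges xs = {{xs ! i, xs ! ((i + 1) mod length xs)} | i. i < length xs}"

definition is_cycle :: "'v set \<Rightarrow> 'v set set \<Rightarrow> 'v list \<Rightarrow> bool" where
  "is_cycle V E xs \<longleftrightarrow> distinct xs \<and> 3 \<le> length xs \<and> set xs \<subseteq> V \<and> cyc_edges xs \<subseteq> E"

definition longest_cycle :: "'v set \<Rightarrow> 'v set set \<Rightarrow> 'v list \<Rightarrow> bool" where
  "longest_cycle V E C \<longleftrightarrow> is_cycle V E C \<and> (\<forall>D. is_cycle V E D \<longrightarrow> length D \<le> length C)"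

definition simple_graph :: "'v set \<Rightarrow> 'v set set \<Rightarrow> bool" where
  "simple_graph V E \<longleftrightarrow> finite V \<and> E \<subseteq> {{u, w} | u w. u \<in> V \<and> w \<in> V \<and> u \<noteq> w}"

definition cubic :: "'v set \<Rightarrow> 'v set set \<Rightarrow> bool" where
  "cubic V E \<longleftrightarrow> (\<forall>v\<in>V. card {e \<in> E. v \<in> e} = 3)"

definition adj_on :: "'v set \<Rightarrow> 'v set set \<Rightarrow> ('v \<times> 'v) set" where
  "adj_on S E = {(u, w). u \<in> S \<and> w \<in> S \<and> {u, w} \<in> E}"

definition connected_on :: "'v set \<Rightarrow> 'v set set \<Rightarrow> bool" where
  "connected_on S E \<longleftrightarrow> (\<forall>u\<in>S. \<forall>w\<in>S. (u, w) \<in> (adj_on S E)\<^sup>*)"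

definition three_connected :: "'v set \<Rightarrow> 'v set set \<Rightarrow> bool" where
  "three_connected V E \<longleftrightarrow> 4 \<le> card V \<and>
     (\<forall>X. X \<subseteq> V \<and> card X \<le> 2 \<longrightarrow> connected_on (V - X) E)"

text \<open>Faces are indexed by a set Fs; bd f is the boundary cycle of face f (vertices in cyclic
  order). Every facial walk is a cycle, every edge lies on exactly two faces, and the Euler
  characteristic is 2. For a connected cubic graph this determines a cellular embedding
  in the sphere (the vertex links are automatically single cycles), i.e. a plane embedding
  whose faces are the given cycles.\<close>
definition plane_embedding ::
  "'v set \<Rightarrow> 'v set set \<Rightarrow> 'f set \<Rightarrow> ('f \<Rightarrow> 'v list) \<Rightarrow> bool" where
  "plane_embedding V E Fs bd \<longleftrightarrow>
     finite Fs \<and> connected_on V E \<and>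
     (\<forall>f\<in>Fs. is_cycle V E (bd f)) \<and>
     (\<forall>e\<in>E. card {f \<in> Fs. e \<in> cyc_edges (bd f)} = 2) \<and>
     int (card V) - int (card E) + int (card Fs) = 2"

definition fullerene ::
  "'v set \<Rightarrow> 'v set set \<Rightarrow> 'f set \<Rightarrow> ('f \<Rightarrow> 'v list) \<Rightarrow> bool" where
  "fullerene V E Fs bd \<longleftrightarrow>
     simple_graph V E \<and> cubic V E \<and> three_connected V E \<and>
     plane_embedding V E Fs bd \<and> (\<forall>f\<in>Fs. length (bd f) \<in> {5, 6})"

definition cyclic_labelling :: "'v list \<Rightarrow> 'v list \<Rightarrow> bool" where
  "cyclic_labelling xs ys \<longleftrightarrow> (\<exists>n. ys = rotate n xs \<or> ys = rotate n (rev xs))"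

definition in_C :: "'v list \<Rightarrow> 'v \<Rightarrow> 'v \<Rightarrow> bool" where
  "in_C C u w \<longleftrightarrow> {u, w} \<in> cyc_edges C"

definition n_white :: "('f \<Rightarrow> 'v list) \<Rightarrow> 'v list \<Rightarrow> 'f \<Rightarrow> nat" where
  "n_white bd C f = card {v \<in> set (bd f). v \<notin> set C}"

definition white_face :: "('f \<Rightarrow> 'v list) \<Rightarrow> 'v list \<Rightarrow> 'f \<Rightarrow> bool" where
  "white_face bd C f \<longleftrightarrow> n_white bd C f = 2"

definition black_face :: "('f \<Rightarrow> 'v list) \<Rightarrow> 'v list \<Rightarrow> 'f \<Rightarrow> bool" where
  "black_face bd C f \<longleftrightarrow> n_white bd C f = 0"

definition vtx :: "('f \<Rightarrow> 'v list) \<Rightarrow> 'f \<Rightarrow> int \<Rightarrow> 'v" where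
  "vtx bd h i = bd h ! nat (i mod int (length (bd h)))"

definition nbr_face :: "'f set \<Rightarrow> ('f \<Rightarrow> 'v list) \<Rightarrow> 'f \<Rightarrow> int \<Rightarrow> 'f" where
  "nbr_face Fs bd h i =
     (THE g. g \<in> Fs \<and> g \<noteq> h \<and> {vtx bd h i, vtx bd h (i + 1)} \<in> cyc_edges (bd g))"

text \<open>Amount of charge that the black hexagonal face h receives from the face across its
  edge v_i v_(i+1), by Rule A (1/2) or Rule B (1); zero otherwise.\<close>
definition transfer :: "'f set \<Rightarrow> ('f \<Rightarrow> 'v list) \<Rightarrow> 'v list \<Rightarrow> 'f \<Rightarrow> int \<Rightarrow> real" where
  "transfer Fs bd C h i =
     (if length (bd h) = 6 \<and> black_face bd C h \<and> white_face bd C (nbr_face Fs bd h i) then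
        (if in_C C (vtx bd h (i - 1)) (vtx bd h i) \<and> in_C C (vtx bd h i) (vtx bd h (i + 1))
            \<and> in_C C (vtx bd h (i + 1)) (vtx bd h (i + 2)) then 1/2
         else if in_C C (vtx bd h i) (vtx bd h (i + 1))
            \<and> \<not> in_C C (vtx bd h (i - 1)) (vtx bd h i)
            \<and> \<not> in_C C (vtx bd h (i + 1)) (vtx bd h (i + 2)) then 1
         else 0)
      else 0)"

definition final_charge :: "'f set \<Rightarrow> ('f \<Rightarrow> 'v list) \<Rightarrow> 'v list \<Rightarrow> 'f \<Rightarrow> real" where
  "final_charge Fs bd C g =
     real (n_white bd C g)
     + (\<Sum>i\<in>{0..<6}. transfer Fs bd C g i)
     - (\<Sum>h\<in>Fs. \<Sum>i\<in>{0..<6}. if nbr_face Fs bd h i = g then transfer Fs bd C h i else 0)"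

end

theory Submission
  imports Defs
begin

text \<open>Write C as v2 v3 P v5 v6 Q; the white vertices of f are v1 and v4, and maximality of C
  forces this orientation (otherwise C could be rerouted through v1 and v4). Let a and b be the
  neighbours of v2 and v3 on C outside f. The face h across v2 v3 runs v2 v3 b ... a, and if h
  were a pentagon, or a hexagon with a vertex off C, one would find either a vertex of degree four
  or a cycle longer than C. Hence h is a black hexagon containing the path a v2 v3 b of C, so by
  Rule A it receives 1/2 from f, and symmetrically so does the face across v5 v6. Every other edge
  of f contains v1 or v4, so no other face receives charge from f, which keeps 2 - 1/2 - 1/2 = 1.\<close>

section \<open>Edges of paths and cycles given as lists\<close>

fun path_edges :: "'v list \<Rightarrow> 'v set set" where
  "path_edges (x # y # zs) = insert {x, y} (path_edges (y # zs))"
| "path_edges _ = {}"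

lemma path_edges_Cons:
  "path_edges (x # xs) = (if xs = [] then {} else insert {x, hd xs} (path_edges xs))"
  by (cases xs) auto

lemma path_edges_append:
  "path_edges (xs @ ys) =
     path_edges xs \<union> path_edges ys \<union> (if xs = [] \<or> ys = [] then {} else {{last xs, hd ys}})"
  by (induction xs) (auto simp: path_edges_Cons)

lemma path_edges_rev [simp]: "path_edges (rev xs) = path_edges xs"
  by (induction xs) (auto simp: path_edges_append path_edges_Cons insert_commute hd_rev last_rev)

lemma path_edges_conv_nth: "path_edges xs = {{xs ! i, xs ! Suc i} | i. i < length xs - 1}"
proof (induction xs rule: path_edges.induct)
  case (1 x y zs)
  have shift: "{g i | i. i < Suc n} = insert (g 0) {g (Suc i) | i. i < n}" for g :: "nat \<Rightarrow> _" and n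
    by (rule set_eqI) (auto simp: less_Suc_eq_0_disj)
  have "{{(x # y # zs) ! i, (x # y # zs) ! Suc i} | i. i < Suc (length zs)}
      = insert {x, y} {{(y # zs) ! i, (y # zs) ! Suc i} | i. i < length zs}"
    using shift[of "\<lambda>i. {(x # y # zs) ! i, (x # y # zs) ! Suc i}"] by simp
  then show ?case using 1 by simp
qed auto

lemma cyc_edges_conv_path_edges:
  assumes "xs \<noteq> []"
  shows "cyc_edges xs = insert {last xs, hd xs} (path_edges xs)"
proof -
  obtain m where m: "length xs = Suc m" using assms by (cases xs) auto
  have "cyc_edges xs = {{xs ! i, xs ! ((i + 1) mod Suc m)} | i. i < Suc m}"
    by (simp add: cyc_edges_def m)
  also have "\<dots> = {{xs ! i, xs ! ((i + 1) mod Suc m)} | i. i < m} \<union> {{xs ! m, xs ! 0}}"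
    by (auto simp: less_Suc_eq)
  also have "{{xs ! i, xs ! ((i + 1) mod Suc m)} | i. i < m} = {{xs ! i, xs ! Suc i} | i. i < m}"
    by (metis (lifting) Suc_eq_plus1 Suc_less_eq mod_less)
  also have "\<dots> = path_edges xs" by (simp add: path_edges_conv_nth m)
  also have "xs ! m = last xs" using m assms by (simp add: last_conv_nth)
  also have "xs ! 0 = hd xs" using assms by (simp add: hd_conv_nth)
  finally show ?thesis by auto
qed

lemma cyc_edges_append_commute: "cyc_edges (xs @ ys) = cyc_edges (ys @ xs)"
  by (cases "xs = [] \<or> ys = []")
    (auto simp: cyc_edges_conv_path_edges path_edges_append)

lemma cyc_edges_rev [simp]: "cyc_edges (rev xs) = cyc_edges xs"
  by (cases "xs = []") (simp_all add: cyc_edges_conv_path_edges hd_rev last_rev insert_commute)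

lemma cyc_edges_rotate [simp]: "cyc_edges (rotate n xs) = cyc_edges xs"
proof (induction n)
  case (Suc n)
  have "cyc_edges (rotate1 ys) = cyc_edges ys" for ys :: "'a list"
    by (cases ys) (auto simp: cyc_edges_append_commute[of _ "[_]"])
  then show ?case using Suc by simp
qed simp

lemma path_edges_memD: "e \<in> path_edges xs \<Longrightarrow> \<exists>p q. e = {p, q} \<and> p \<in> set xs \<and> q \<in> set xs"
  by (induction xs rule: path_edges.induct) auto

lemma path_edges_cover: "2 \<le> length xs \<Longrightarrow> x \<in> set xs \<Longrightarrow> \<exists>e\<in>path_edges xs. x \<in> e"
proof (induction xs rule: path_edges.induct)
  case (1 a b zs)
  then show ?case by (cases zs) auto
qed auto

lemma path_edges_split:
  "{p, q} \<in> path_edges xs \<Longrightarrow> \<exists>A B. xs = A @ [p, q] @ B \<or> xs = A @ [q, p] @ B"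
proof (induction xs rule: path_edges.induct)
  case (1 x y zs)
  then have "{p, q} = {x, y} \<or> {p, q} \<in> path_edges (y # zs)" by simp
  then show ?case
  proof
    assume "{p, q} = {x, y}"
    then show ?thesis by (auto simp: doubleton_eq_iff intro: exI[of _ "[]"])
  next
    assume "{p, q} \<in> path_edges (y # zs)"
    then obtain A B where "y # zs = A @ [p, q] @ B \<or> y # zs = A @ [q, p] @ B" using 1 by blast
    then show ?thesis by (metis append_Cons)
  qed
qed auto

lemma cyc_edges_memD:
  assumes "{p, q} \<in> cyc_edges xs"
  shows "p \<in> set xs \<and> q \<in> set xs"
proof -
  obtain i where i: "i < length xs" "{p, q} = {xs ! i, xs ! ((i + 1) mod length xs)}"
    using assms unfolding cyc_edges_def by blast
  then have "(i + 1) mod length xs < length xs" by (intro mod_less_divisor) linarith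
  then show ?thesis using i by (auto simp: doubleton_eq_iff)
qed

lemma cyc_edges_Cons_neighbour:
  assumes "u \<notin> set ys" "ys \<noteq> []" "{u, w} \<in> cyc_edges (u # ys)"
  shows "w = hd ys \<or> w = last ys"
proof -
  have "{u, w} \<notin> path_edges ys"
    using assms(1) by (auto simp: doubleton_eq_iff dest!: path_edges_memD)
  then show ?thesis
    using assms by (auto simp: cyc_edges_conv_path_edges path_edges_Cons doubleton_eq_iff)
qed

lemma cyc_edges_rotate_to:
  assumes "u \<in> set xs"
  obtains ys where "cyc_edges (u # ys) = cyc_edges xs" "set (u # ys) = set xs"
    "length (u # ys) = length xs" "distinct xs \<Longrightarrow> distinct (u # ys)"
proof -
  obtain A B where xs: "xs = A @ u # B" using assms by (blast dest: split_list)
  show thesis by (rule that[of "B @ A"]) (auto simp: xs cyc_edges_append_commute[of A])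
qed

lemma cyc_edges_rotate_to_edge:
  assumes "distinct xs" "3 \<le> length xs" "{p, q} \<in> cyc_edges xs" "p \<noteq> q"
  obtains R where "cyc_edges (p # q # R) = cyc_edges xs" "set (p # q # R) = set xs"
    "length (p # q # R) = length xs" "distinct (p # q # R)"
proof -
  obtain ys where ys: "cyc_edges (p # ys) = cyc_edges xs" "set (p # ys) = set xs"
    "length (p # ys) = length xs" "distinct (p # ys)"
    using cyc_edges_rotate_to cyc_edges_memD[OF assms(3)] assms(1) by metis
  have ne: "ys \<noteq> []" using ys(3) assms(2) by auto
  have "q = hd ys \<or> q = last ys"
    using cyc_edges_Cons_neighbour[of p ys q] ys assms(3) ne by auto
  then show thesis
  proof
    assume "q = hd ys"
    then show thesis using ys ne by (intro that[of "tl ys"]) auto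
  next
    assume q: "q = last ys"
    have "cyc_edges (p # rev ys) = cyc_edges (rev (p # rev ys))" by (rule cyc_edges_rev[symmetric])
    also have "rev (p # rev ys) = ys @ [p]" by simp
    also have "cyc_edges (ys @ [p]) = cyc_edges (p # ys)"
      by (simp add: cyc_edges_append_commute[of ys])
    finally have c: "cyc_edges (p # rev ys) = cyc_edges xs" using ys by simp
    obtain R where "rev ys = q # R" using q ne by (metis hd_Cons_tl hd_rev rev_is_Nil_conv)
    then have "p # q # R = p # rev ys" by simp
    then show thesis using that[of R] c ys by simp
  qed
qed

lemma cyc_edges_neighbours:
  assumes "distinct xs" "3 \<le> length xs" "u \<in> set xs"
  obtains p q where "p \<noteq> q" "{u, p} \<in> cyc_edges xs" "{u, q} \<in> cyc_edges xs"
    "\<And>w. {u, w} \<in> cyc_edges xs \<Longrightarrow> w = p \<or> w = q"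
proof -
  obtain ys where ys: "cyc_edges (u # ys) = cyc_edges xs" "set (u # ys) = set xs"
    "length (u # ys) = length xs" "distinct (u # ys)"
    using cyc_edges_rotate_to[OF assms(3)] assms(1) by metis
  have "2 \<le> length ys" using ys(3) assms(2) by simp
  then obtain y1 ys1 where ys1: "ys = y1 # ys1" "ys1 \<noteq> []" by (cases ys) (auto simp: Suc_le_eq)
  then obtain ys' y2 where ys_eq: "ys = y1 # ys' @ [y2]" by (metis rev_exhaust)
  have "y1 \<noteq> y2" using ys(4) ys_eq by auto
  moreover have "{u, y1} \<in> cyc_edges (u # ys)" "{u, y2} \<in> cyc_edges (u # ys)"
    using ys_eq by (auto simp: cyc_edges_conv_path_edges path_edges_Cons insert_commute)
  ultimately show thesis
    using that cyc_edges_Cons_neighbour[of u ys] ys ys_eq by auto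
qed

lemma cyc_edges_no_three_neighbours:
  assumes "distinct xs" "3 \<le> length xs" "distinct [p, q, r]"
    "{u, p} \<in> cyc_edges xs" "{u, q} \<in> cyc_edges xs" "{u, r} \<in> cyc_edges xs"
  shows False
proof -
  have "u \<in> set xs" using cyc_edges_memD[OF assms(4)] by simp
  from cyc_edges_neighbours[OF assms(1,2) this] obtain s t
    where "\<And>w. {u, w} \<in> cyc_edges xs \<Longrightarrow> w = s \<or> w = t" by metis
  then have "p \<in> {s, t}" "q \<in> {s, t}" "r \<in> {s, t}" using assms(4-6) by auto
  then show False using assms(3) by auto
qed

lemma cyclic_labelling_cycle:
  assumes "distinct xs" "cyclic_labelling xs ys"
  shows "cyc_edges xs = cyc_edges ys" "set xs = set ys" "distinct ys"
proof -
  obtain n where "ys = rotate n xs \<or> ys = rotate n (rev xs)"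
    using assms(2) unfolding cyclic_labelling_def by blast
  then show "cyc_edges xs = cyc_edges ys" "set xs = set ys" "distinct ys"
    using assms(1) by auto
qed

lemma is_cycleI:
  assumes "simple_graph V E" "distinct D" "3 \<le> length D" "path_edges D \<subseteq> E" "{last D, hd D} \<in> E"
  shows "is_cycle V E D"
proof -
  have "set D \<subseteq> V"
  proof
    fix x assume "x \<in> set D"
    then obtain e where "e \<in> path_edges D" "x \<in> e" using path_edges_cover[of D x] assms(3) by auto
    then show "x \<in> V" using assms(1,4) unfolding simple_graph_def by blast
  qed
  moreover have "D \<noteq> []" using assms(3) by auto
  ultimately show ?thesis using assms unfolding is_cycle_def
    by (simp add: cyc_edges_conv_path_edges)
qed

lemma cubic_no_four_neighbours:
  assumes "cubic V E" "v \<in> V" "distinct [p, q, r, s]"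
    "{v, p} \<in> E" "{v, q} \<in> E" "{v, r} \<in> E" "{v, s} \<in> E"
  shows False
proof -
  have card3: "card {e \<in> E. v \<in> e} = 3" using assms(1,2) by (simp add: cubic_def)
  then have fin: "finite {e \<in> E. v \<in> e}" by (metis card.infinite zero_neq_numeral)
  have sub: "{{v, p}, {v, q}, {v, r}, {v, s}} \<subseteq> {e \<in> E. v \<in> e}" using assms(4-) by auto
  have "card {{v, p}, {v, q}, {v, r}, {v, s}} = 4" using assms(3) by (auto simp: doubleton_eq_iff)
  with card_mono[OF fin sub] card3 show False by simp
qed

section \<open>Faces of a plane embedding\<close>

abbreviation face_edge :: "('f \<Rightarrow> 'v list) \<Rightarrow> 'f \<Rightarrow> int \<Rightarrow> 'v set" where
  "face_edge bd h i \<equiv> {vtx bd h i, vtx bd h (i + 1)}"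

lemma vtx_of_nat: "bd h \<noteq> [] \<Longrightarrow> vtx bd h (int k) = bd h ! (k mod length (bd h))"
  by (simp add: vtx_def flip: of_nat_mod)

lemma vtx_conv_nth:
  assumes "bd h \<noteq> []"
  obtains k where "k < length (bd h)" "int k = j mod int (length (bd h))" "vtx bd h j = bd h ! k"
proof -
  have "0 \<le> j mod int (length (bd h))" "j mod int (length (bd h)) < int (length (bd h))"
    using assms by simp_all
  then show thesis by (intro that[of "nat (j mod int (length (bd h)))"]) (auto simp: vtx_def)
qed

lemma vtx_in_set: "bd h \<noteq> [] \<Longrightarrow> vtx bd h j \<in> set (bd h)"
  by (metis nth_mem vtx_conv_nth)

lemma vtx_eq_iff:
  assumes "distinct (bd h)" "bd h \<noteq> []"
  shows "vtx bd h j = vtx bd h k \<longleftrightarrow> j mod int (length (bd h)) = k mod int (length (bd h))"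
proof -
  obtain j' where j': "j' < length (bd h)" "int j' = j mod int (length (bd h))"
    "vtx bd h j = bd h ! j'"
    using vtx_conv_nth[of bd h, OF assms(2)] by metis
  obtain k' where k': "k' < length (bd h)" "int k' = k mod int (length (bd h))"
    "vtx bd h k = bd h ! k'"
    using vtx_conv_nth[of bd h, OF assms(2)] by metis
  show ?thesis using nth_eq_iff_index_eq[OF assms(1) j'(1) k'(1)] j' k' by auto
qed

lemma face_edge_in_cyc_edges:
  assumes "bd h \<noteq> []"
  shows "face_edge bd h j \<in> cyc_edges (bd h)"
proof -
  define n where "n = length (bd h)"
  obtain k where k: "k < n" "int k = j mod int n" "vtx bd h j = bd h ! k"
    using vtx_conv_nth[of bd h, OF assms] unfolding n_def by metis
  have "int ((k + 1) mod n) = (int k + 1) mod int n" by (simp add: of_nat_mod add.commute)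
  also have "\<dots> = (j + 1) mod int n" using k(2) by (simp add: mod_add_left_eq)
  finally have "vtx bd h (j + 1) = bd h ! ((k + 1) mod n)"
    unfolding vtx_def n_def by (metis nat_int)
  then show ?thesis using k unfolding cyc_edges_def n_def by auto
qed

lemma hexagon_face_edge_index_unique:
  assumes "distinct (bd h)" "length (bd h) = 6" "e \<in> cyc_edges (bd h)"
  shows "\<exists>!i. i \<in> {0..<6} \<and> face_edge bd h i = e"
proof -
  have ne: "bd h \<noteq> []" using assms(2) by auto
  obtain k where k: "k < 6" "e = {bd h ! k, bd h ! ((k + 1) mod 6)}"
    using assms(2,3) unfolding cyc_edges_def by auto
  have "face_edge bd h (int k) = e"
    using k vtx_of_nat[of bd h k, OF ne] vtx_of_nat[of bd h "k + 1", OF ne] assms(2)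
    by (simp add: ac_simps)
  moreover have "i = j"
    if "i \<in> {0..<6}" "j \<in> {0..<6}" "face_edge bd h i = face_edge bd h j" for i j :: int
  proof -
    have vtx6: "vtx bd h x = vtx bd h y \<longleftrightarrow> x mod 6 = y mod 6" for x y
      using vtx_eq_iff[of bd h, OF assms(1) ne] assms(2) by simp
    from that(3) have "i mod 6 = j mod 6 \<or> (i mod 6 = (j + 1) mod 6 \<and> (i + 1) mod 6 = j mod 6)"
      by (auto simp: doubleton_eq_iff vtx6)
    then show "i = j" using that(1,2) by auto presburger+
  qed
  ultimately show ?thesis using k(1) by (intro ex1I[of _ "int k"]) auto
qed

lemma plane_embedding_face_is_cycle:
  "plane_embedding V E Fs bd \<Longrightarrow> g \<in> Fs \<Longrightarrow> is_cycle V E (bd g)"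
  by (simp add: plane_embedding_def)

lemma plane_embedding_face_edge_in_E:
  "plane_embedding V E Fs bd \<Longrightarrow> g \<in> Fs \<Longrightarrow> e \<in> cyc_edges (bd g) \<Longrightarrow> e \<in> E"
  using plane_embedding_face_is_cycle[of V E Fs bd g] by (auto simp: is_cycle_def)

lemma plane_embedding_third_face:
  assumes "plane_embedding V E Fs bd" "e \<in> E" "g1 \<in> Fs" "g2 \<in> Fs" "g \<in> Fs" "g1 \<noteq> g2"
    "e \<in> cyc_edges (bd g1)" "e \<in> cyc_edges (bd g2)" "e \<in> cyc_edges (bd g)"
  shows "g = g1 \<or> g = g2"
proof (rule ccontr)
  assume g: "\<not> (g = g1 \<or> g = g2)"
  have card2: "card {g \<in> Fs. e \<in> cyc_edges (bd g)} = 2"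
    using assms(1,2) unfolding plane_embedding_def by blast
  then have fin: "finite {g \<in> Fs. e \<in> cyc_edges (bd g)}" by (metis card.infinite zero_neq_numeral)
  have "{g1, g2, g} \<subseteq> {g \<in> Fs. e \<in> cyc_edges (bd g)}" using assms by auto
  then have "card {g1, g2, g} \<le> 2" using card_mono[OF fin] card2 by metis
  moreover have "card {g1, g2, g} = 3" using assms(6) g by auto
  ultimately show False by simp
qed

lemma plane_embedding_other_face:
  assumes "plane_embedding V E Fs bd" "e \<in> E"
  obtains g where "g \<in> Fs" "e \<in> cyc_edges (bd g)" "g \<noteq> h"
proof -
  have "card {g \<in> Fs. e \<in> cyc_edges (bd g)} = 2"
    using assms unfolding plane_embedding_def by blast
  then obtain x y where xy: "{g \<in> Fs. e \<in> cyc_edges (bd g)} = {x, y}" "x \<noteq> y"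
    unfolding card_2_iff by blast
  then have "x \<in> Fs" "e \<in> cyc_edges (bd x)" "y \<in> Fs" "e \<in> cyc_edges (bd y)" by auto
  then show thesis using that xy(2) by (cases "x = h") blast+
qed

lemma nbr_face_eqI:
  assumes "plane_embedding V E Fs bd" "h \<in> Fs" "g \<in> Fs" "g \<noteq> h"
    "face_edge bd h i \<in> cyc_edges (bd g)"
  shows "nbr_face Fs bd h i = g"
proof -
  have "bd h \<noteq> []"
    using plane_embedding_face_is_cycle[OF assms(1,2)] by (auto simp: is_cycle_def)
  then have eh: "face_edge bd h i \<in> cyc_edges (bd h)" by (rule face_edge_in_cyc_edges)
  have eE: "face_edge bd h i \<in> E" by (rule plane_embedding_face_edge_in_E[OF assms(1,2) eh])
  have unique: "g' = g"
    if "g' \<in> Fs \<and> g' \<noteq> h \<and> face_edge bd h i \<in> cyc_edges (bd g')" for g'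
    using plane_embedding_third_face[OF assms(1) eE assms(3,2), of g'] assms(4,5) eh that by auto
  show ?thesis unfolding nbr_face_def
    by (rule the_equality[OF _ unique]) (use assms(3-5) in blast)
qed

lemma nbr_face_spec:
  assumes "plane_embedding V E Fs bd" "h \<in> Fs"
  shows "nbr_face Fs bd h i \<noteq> h" "face_edge bd h i \<in> cyc_edges (bd (nbr_face Fs bd h i))"
proof -
  have "bd h \<noteq> []"
    using plane_embedding_face_is_cycle[OF assms] by (auto simp: is_cycle_def)
  then have "face_edge bd h i \<in> E"
    by (rule plane_embedding_face_edge_in_E[OF assms face_edge_in_cyc_edges[of bd h]])
  then obtain g where "g \<in> Fs" "face_edge bd h i \<in> cyc_edges (bd g)" "g \<noteq> h"
    by (rule plane_embedding_other_face[OF assms(1)])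
  with nbr_face_eqI[OF assms] show "nbr_face Fs bd h i \<noteq> h"
    "face_edge bd h i \<in> cyc_edges (bd (nbr_face Fs bd h i))" by auto
qed

lemma hexagon_sum_face_edge_indicator:
  assumes "distinct (bd h)" "length (bd h) = 6" "e \<in> cyc_edges (bd h)"
  shows "(\<Sum>i\<in>{0..<6::int}. if face_edge bd h i = e then c else 0) = c"
proof -
  obtain i0 where i0: "i0 \<in> {0..<6} \<and> face_edge bd h i0 = e"
    and uniq: "\<forall>i. i \<in> {0..<6} \<and> face_edge bd h i = e \<longrightarrow> i = i0"
    using hexagon_face_edge_index_unique[of bd h, OF assms] by (rule ex1E)
  have "(\<Sum>i\<in>{0..<6::int}. if face_edge bd h i = e then c else 0)
      = (\<Sum>i\<in>{0..<6::int}. if i = i0 then c else 0)"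
  proof (rule sum.cong[OF refl])
    fix i :: int assume "i \<in> {0..<6}"
    then have "(face_edge bd h i = e) = (i = i0)" using i0 uniq by blast
    then show "(if face_edge bd h i = e then c else 0) = (if i = i0 then c else 0)" by (simp only:)
  qed
  also have "\<dots> = c" using i0 by (simp add: sum.delta)
  finally show ?thesis .
qed

text \<open>The hexagon hypothesis is needed: over the index range \<open>{0..<6}\<close> an edge of a pentagon is
  counted twice.\<close>
lemma sum_face_edge_indicator:
  assumes pe: "plane_embedding V E Fs bd" and f: "f \<in> Fs" "e \<in> cyc_edges (bd f)"
    and hex: "\<And>h. h \<in> Fs \<Longrightarrow> h \<noteq> f \<Longrightarrow> e \<in> cyc_edges (bd h) \<Longrightarrow> length (bd h) = 6"
  shows "(\<Sum>h\<in>Fs. \<Sum>i\<in>{0..<6::int}. if h \<noteq> f \<and> face_edge bd h i = e then c else 0) = c"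
proof -
  have eE: "e \<in> E" using plane_embedding_face_edge_in_E[OF pe f] .
  obtain h0 where h0: "h0 \<in> Fs" "e \<in> cyc_edges (bd h0)" "h0 \<noteq> f"
    using plane_embedding_other_face[OF pe eE] by metis
  have "(\<Sum>i\<in>{0..<6::int}. if h \<noteq> f \<and> face_edge bd h i = e then c else 0)
      = (if h = h0 then c else 0)"
    if h: "h \<in> Fs" for h
  proof (cases "h = h0")
    case True
    have "distinct (bd h0)"
      using plane_embedding_face_is_cycle[OF pe h0(1)] by (simp add: is_cycle_def)
    then show ?thesis
      using True h0(3) hexagon_sum_face_edge_indicator[of bd h0, OF _ hex[OF h0(1,3,2)] h0(2)]
        by simp
  next
    case False
    have "face_edge bd h i \<noteq> e" if "h \<noteq> f" for i
    proof
      assume "face_edge bd h i = e"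
      moreover have "bd h \<noteq> []"
        using plane_embedding_face_is_cycle[OF pe h] by (auto simp: is_cycle_def)
      ultimately have "e \<in> cyc_edges (bd h)" using face_edge_in_cyc_edges[of bd h i] by simp
      then show False
        using plane_embedding_third_face[OF pe eE f(1) h0(1) h] h0 f that False by auto
    qed
    then have "(if h \<noteq> f \<and> face_edge bd h i = e then c else 0) = 0" for i by auto
    then show ?thesis using False by simp
  qed
  then have "(\<Sum>h\<in>Fs. \<Sum>i\<in>{0..<6::int}. if h \<noteq> f \<and> face_edge bd h i = e then c else 0)
      = (\<Sum>h\<in>Fs. if h = h0 then c else 0)" by (rule sum.cong[OF refl])
  also have "\<dots> = c"
    using h0(1) pe by (simp add: plane_embedding_def sum.delta)
  finally show ?thesis .
qed

lemma plane_embedding_third_edge_at_vertex: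
  assumes pe: "plane_embedding V E Fs bd" and faces: "f \<in> Fs" "h \<in> Fs" "f \<noteq> h"
    and nbrs: "distinct [p, q, r]" "{u, p} \<in> E" "{u, q} \<in> E" "{u, r} \<in> E"
      "\<And>x. {u, x} \<in> E \<Longrightarrow> x \<in> {p, q, r}"
    and f: "{u, p} \<in> cyc_edges (bd f)" "{u, q} \<in> cyc_edges (bd f)"
    and h: "{u, q} \<in> cyc_edges (bd h)" "{u, w} \<in> cyc_edges (bd h)" "w \<noteq> q"
  shows "w = r"
proof (rule ccontr)
  have face_cycle: "distinct (bd g)" "3 \<le> length (bd g)" if "g \<in> Fs" for g
    using plane_embedding_face_is_cycle[OF pe that] by (auto simp: is_cycle_def)
  assume "w \<noteq> r"
  moreover have "{u, w} \<in> E" using plane_embedding_face_edge_in_E[OF pe faces(2) h(2)] .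
  ultimately have w: "w = p" using nbrs(5) h(3) by blast
  obtain g where g: "g \<in> Fs" "{u, r} \<in> cyc_edges (bd g)"
    using plane_embedding_other_face[OF pe nbrs(4)] by metis
  have "u \<in> set (bd g)" using cyc_edges_memD[OF g(2)] by simp
  then obtain s where s: "{u, s} \<in> cyc_edges (bd g)" "s \<noteq> r"
    using cyc_edges_neighbours[OF face_cycle[OF g(1)]] by metis
  then have "s \<in> {p, q}" using nbrs(5) plane_embedding_face_edge_in_E[OF pe g(1)] by blast
  then have "g = f \<or> g = h"
    using plane_embedding_third_face[OF pe _ faces(1,2) g(1) faces(3)] s f h w nbrs(2,3) by blast
  then show False
  proof
    assume "g = f"
    then show False
      using cyc_edges_no_three_neighbours[OF face_cycle[OF faces(1)] nbrs(1) f] g(2) by blast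
  next
    assume "g = h"
    then show False
      using cyc_edges_no_three_neighbours[OF face_cycle[OF faces(2)] nbrs(1) _ h(1)] g(2) h(2) w
        by blast
  qed
qed

section \<open>A longest cycle through two opposite edges of a hexagon\<close>

lemma cycle_through_two_edges:
  assumes "distinct C" "3 \<le> length C" "distinct [v2, v3, v5, v6]"
    "{v2, v3} \<in> cyc_edges C" "{v5, v6} \<in> cyc_edges C"
  obtains A B x y where "(x, y) = (v5, v6) \<or> (x, y) = (v6, v5)"
    "cyc_edges C = cyc_edges ([v2, v3] @ A @ [x, y] @ B)" "set C = set ([v2, v3] @ A @ [x, y] @ B)"
    "length C = length ([v2, v3] @ A @ [x, y] @ B)" "distinct ([v2, v3] @ A @ [x, y] @ B)"
proof -
  obtain R where R: "cyc_edges (v2 # v3 # R) = cyc_edges C" "set (v2 # v3 # R) = set C"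
    "length (v2 # v3 # R) = length C" "distinct (v2 # v3 # R)"
    using cyc_edges_rotate_to_edge[OF assms(1,2,4)] assms(3) by auto
  have "{v5, v6} \<in> insert {last (v2 # v3 # R), v2} (insert {v2, v3} (path_edges (v3 # R)))"
    using R(1) assms(5) by (simp add: cyc_edges_conv_path_edges)
  moreover have "{v5, v6} \<noteq> {last (v2 # v3 # R), v2}" "{v5, v6} \<noteq> {v2, v3}"
    "R \<noteq> [] \<Longrightarrow> {v5, v6} \<noteq> {v3, hd R}"
    using assms(3) by (auto simp: doubleton_eq_iff)
  ultimately have "{v5, v6} \<in> path_edges R" by (auto simp: path_edges_Cons split: if_splits)
  then obtain A B where "R = A @ [v5, v6] @ B \<or> R = A @ [v6, v5] @ B"
    using path_edges_split by metis
  then show thesis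
  proof
    assume "R = A @ [v5, v6] @ B"
    then show thesis using R by (intro that[of v5 v6 A B]) auto
  next
    assume "R = A @ [v6, v5] @ B"
    then show thesis using R by (intro that[of v6 v5 A B]) auto
  qed
qed

text \<open>If C traversed v5 v6 in the other direction, C could be rerouted through both white
  vertices: v3 A v6 v1 v2 (rev B) v5 v4 is a longer cycle.\<close>
lemma longest_cycle_orientation:
  assumes "simple_graph V E" "longest_cycle V E C"
    and C: "cyc_edges C = cyc_edges ([v2, v3] @ A @ [v6, v5] @ B)"
      "length C = length ([v2, v3] @ A @ [v6, v5] @ B)"
      "distinct ([v2, v3] @ A @ [v6, v5] @ B)" "set C = set ([v2, v3] @ A @ [v6, v5] @ B)"
    and white: "v1 \<notin> set C" "v4 \<notin> set C" "v1 \<noteq> v4"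
    and edges: "{v6, v1} \<in> E" "{v1, v2} \<in> E" "{v5, v4} \<in> E" "{v4, v3} \<in> E"
  shows False
proof -
  have "cyc_edges C \<subseteq> E" using assms(2) by (simp add: longest_cycle_def is_cycle_def)
  then have CE: "path_edges ([v2, v3] @ A @ [v6, v5] @ B) \<subseteq> E" "{last (v5 # B), v2} \<in> E"
    using C(1) by (auto simp: cyc_edges_conv_path_edges simp del: append.simps append_Cons)
  then have p1: "path_edges (v3 # A @ [v6]) \<subseteq> E" and p2: "path_edges (v5 # B @ [v2]) \<subseteq> E"
    by (auto simp: path_edges_append path_edges_Cons split: if_splits)
  define D where "D = (v3 # A @ [v6]) @ [v1] @ rev (v5 # B @ [v2]) @ [v4]"
  have "is_cycle V E D"
  proof (rule is_cycleI[OF assms(1)])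
    show "distinct D" using C(3,4) white by (auto simp: D_def)
    show "3 \<le> length D" by (simp add: D_def)
    show "path_edges D \<subseteq> E"
      using p1 p2 edges
      by (auto simp: D_def path_edges_append path_edges_Cons insert_commute hd_rev last_rev)
    show "{last D, hd D} \<in> E" using edges by (simp add: D_def insert_commute)
  qed
  then have "length D \<le> length C" using assms(2) by (auto simp: longest_cycle_def)
  then show False using C(2) by (simp add: D_def)
qed

text \<open>Up to rotation, C is the list v2 v3 P v5 v6 Q; a and b are the neighbours of v2 and v3 on C
  outside f.\<close>
locale white_hexagon =
  fixes V :: "'v set" and E :: "'v set set" and Fs :: "'f set" and bd :: "'f \<Rightarrow> 'v list"
    and C :: "'v list" and f :: 'f and v1 v2 v3 v4 v5 v6 :: 'v and P Q :: "'v list" and a b :: 'v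
  assumes fullerene: "fullerene V E Fs bd"
    and longest: "longest_cycle V E C"
    and f_face: "f \<in> Fs"
    and f_edges: "cyc_edges (bd f) = cyc_edges [v1, v2, v3, v4, v5, v6]"
    and f_distinct: "distinct [v1, v2, v3, v4, v5, v6]"
    and C_edges: "cyc_edges C = cyc_edges ([v2, v3] @ P @ [v5, v6] @ Q)"
    and C_set: "set C = set ([v2, v3] @ P @ [v5, v6] @ Q)"
    and C_length: "length C = length ([v2, v3] @ P @ [v5, v6] @ Q)"
    and C_distinct: "distinct ([v2, v3] @ P @ [v5, v6] @ Q)"
    and v1_white: "v1 \<notin> set C" and v4_white: "v4 \<notin> set C"
    and a_def: "a = last (v6 # Q)" and b_def: "b = hd (P @ [v5])"
begin

lemma graph_simple: "simple_graph V E"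
  and graph_cubic: "cubic V E"
  and embedding: "plane_embedding V E Fs bd"
  using fullerene by (simp_all add: fullerene_def)

lemma edge_endpoints: "{u, w} \<in> E \<Longrightarrow> u \<in> V \<and> w \<in> V \<and> u \<noteq> w"
  using graph_simple unfolding simple_graph_def by (auto simp: doubleton_eq_iff)

lemma no_four_neighbours:
  "{v, p} \<in> E \<Longrightarrow> {v, q} \<in> E \<Longrightarrow> {v, r} \<in> E \<Longrightarrow> {v, s} \<in> E \<Longrightarrow> distinct [p, q, r, s] \<Longrightarrow> False"
  using cubic_no_four_neighbours[OF graph_cubic] edge_endpoints by blast

lemma C_cycle: "distinct C" "3 \<le> length C" "cyc_edges C \<subseteq> E"
  using longest by (auto simp: longest_cycle_def is_cycle_def)

lemma C_path_edges:
  "path_edges ([v2, v3] @ P @ [v5, v6] @ Q) \<subseteq> E" "{last ([v2, v3] @ P @ [v5, v6] @ Q), v2} \<in> E"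
  using C_cycle(3) C_edges by (auto simp: cyc_edges_conv_path_edges simp del: append.simps)

lemma path_edges_P: "path_edges P \<subseteq> E" and path_edges_Q: "path_edges Q \<subseteq> E"
  using C_path_edges(1) by (auto simp: path_edges_append path_edges_Cons split: if_splits)

lemma P_ends: "P \<noteq> [] \<Longrightarrow> {v3, hd P} \<in> E" "P \<noteq> [] \<Longrightarrow> {last P, v5} \<in> E" "P = [] \<Longrightarrow> {v3, v5} \<in> E"
  and Q_ends: "Q \<noteq> [] \<Longrightarrow> {v6, hd Q} \<in> E" "Q \<noteq> [] \<Longrightarrow> {last Q, v2} \<in> E" "Q = [] \<Longrightarrow> {v6, v2} \<in> E"
  using C_path_edges by (auto simp: path_edges_append path_edges_Cons split: if_splits)

lemma C_parts_distinct: "set P \<inter> set Q = {}" "v2 \<notin> set P" "v3 \<notin> set P" "v5 \<notin> set P"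
  "v6 \<notin> set P" "v2 \<notin> set Q" "v3 \<notin> set Q" "v5 \<notin> set Q" "v6 \<notin> set Q" "distinct P" "distinct Q"
  using C_distinct by auto

lemma v1_notin: "v1 \<notin> set P" "v1 \<notin> set Q" and v4_notin: "v4 \<notin> set P" "v4 \<notin> set Q"
  using v1_white v4_white C_set by auto

lemma f_edges_in_E: "{v1, v2} \<in> E" "{v2, v3} \<in> E" "{v3, v4} \<in> E" "{v4, v5} \<in> E"
  "{v5, v6} \<in> E" "{v6, v1} \<in> E"
proof -
  have "cyc_edges [v1, v2, v3, v4, v5, v6] \<subseteq> E"
    using plane_embedding_face_is_cycle[OF embedding f_face] f_edges by (simp add: is_cycle_def)
  then show "{v1, v2} \<in> E" "{v2, v3} \<in> E" "{v3, v4} \<in> E" "{v4, v5} \<in> E"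
    "{v5, v6} \<in> E" "{v6, v1} \<in> E"
    by (auto simp: cyc_edges_conv_path_edges insert_commute)
qed

lemma length_C_ge_6: "6 \<le> length ([v2, v3] @ P @ [v5, v6] @ Q)"
proof -
  have "is_cycle V E [v1, v2, v3, v4, v5, v6]"
    using f_edges_in_E f_distinct by (intro is_cycleI[OF graph_simple]) (auto simp: insert_commute)
  then show ?thesis using longest C_length by (auto simp: longest_cycle_def)
qed

lemma no_longer_cycle:
  assumes "distinct D" "path_edges D \<subseteq> E" "{last D, hd D} \<in> E"
    "length P + length Q + 4 < length D"
  shows False
proof -
  have "is_cycle V E D" using assms length_C_ge_6 by (intro is_cycleI[OF graph_simple]) auto
  then show False using longest C_length assms(4) by (auto simp: longest_cycle_def)
qed

lemma a_eq: "a = (if Q = [] then v6 else last Q)"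
  by (simp add: a_def)

lemma b_eq: "b = (if P = [] then v5 else hd P)"
  unfolding b_def by (cases P) auto

lemma a_on_C: "a \<in> set (v6 # Q)" and b_on_C: "b \<in> set (P @ [v5])"
  by (auto simp: a_eq b_eq)

lemma on_C: "v2 \<in> set C" "v3 \<in> set C" "v5 \<in> set C" "v6 \<in> set C" "set P \<subseteq> set C" "set Q \<subseteq> set C"
  "a \<in> set C" "b \<in> set C"
  using C_set a_on_C b_on_C by auto

lemma a_v2_edge: "{a, v2} \<in> E" and v3_b_edge: "{v3, b} \<in> E"
  using P_ends Q_ends by (auto simp: a_eq b_eq)

lemma C_edges_at_v2v3: "{v2, v3} \<in> cyc_edges C" "{a, v2} \<in> cyc_edges C" "{v3, b} \<in> cyc_edges C"
proof -
  have "cyc_edges C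
      = insert {last ([v2, v3] @ P @ [v5, v6] @ Q), v2} (path_edges ([v2, v3] @ P @ [v5, v6] @ Q))"
    using C_edges by (simp add: cyc_edges_conv_path_edges del: append.simps)
  moreover have "last ([v2, v3] @ P @ [v5, v6] @ Q) = a" by (simp add: a_def last_append)
  moreover have "path_edges ([v2, v3] @ P @ [v5, v6] @ Q)
      = insert {v2, v3} (insert {v3, b} (path_edges (P @ [v5, v6] @ Q)))"
    by (simp add: path_edges_Cons b_def hd_append)
  ultimately show "{v2, v3} \<in> cyc_edges C" "{a, v2} \<in> cyc_edges C" "{v3, b} \<in> cyc_edges C" by auto
qed

text \<open>Both follow from: a vertex of C has exactly two of its three edges on C.\<close>
lemma C_edge_if_white_neighbour:
  assumes "y \<in> set C" "z \<notin> set C" "{y, z} \<in> E" "{y, w} \<in> E" "w \<noteq> z"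
  shows "{y, w} \<in> cyc_edges C"
proof (rule ccontr)
  assume off: "{y, w} \<notin> cyc_edges C"
  obtain p q where pq: "p \<noteq> q" "{y, p} \<in> cyc_edges C" "{y, q} \<in> cyc_edges C"
    using cyc_edges_neighbours[OF C_cycle(1,2) assms(1)] by metis
  have "p \<in> set C" "q \<in> set C" using cyc_edges_memD[OF pq(2)] cyc_edges_memD[OF pq(3)] by simp_all
  then have "distinct [w, z, p, q]" using pq off assms(2,5) by auto
  then show False using no_four_neighbours[OF assms(4,3)] pq(2,3) C_cycle(3) by blast
qed

lemma at_most_one_chord:
  assumes "z \<in> set C" "{z, x} \<in> E" "{z, w} \<in> E" "x \<noteq> w"
    "{z, x} \<notin> cyc_edges C" "{z, w} \<notin> cyc_edges C"
  shows False
proof -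
  obtain p q where pq: "p \<noteq> q" "{z, p} \<in> cyc_edges C" "{z, q} \<in> cyc_edges C"
    using cyc_edges_neighbours[OF C_cycle(1,2) assms(1)] by metis
  then have "distinct [x, w, p, q]" using assms(4-6) by auto
  then show False using no_four_neighbours[OF assms(2,3)] pq(2,3) C_cycle(3) by blast
qed

lemma C_neighbour_of_b:
  assumes "{b, w} \<in> cyc_edges C"
  shows "w = v3 \<or> w = (if P = [] then v6 else hd (tl P @ [v5]))"
proof (cases P)
  case Nil
  have "cyc_edges C = cyc_edges (v5 # (v6 # Q @ [v2, v3]))"
    using C_edges cyc_edges_append_commute[of "[v2, v3]" "v5 # v6 # Q"] Nil by simp
  then show ?thesis
    using cyc_edges_Cons_neighbour[of v5 "v6 # Q @ [v2, v3]" w] assms C_distinct Nil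
      by (auto simp: b_eq)
next
  case (Cons x P2)
  have "cyc_edges C = cyc_edges (x # (P2 @ [v5, v6] @ Q @ [v2, v3]))"
    using C_edges cyc_edges_append_commute[of "[v2, v3]" "x # P2 @ [v5, v6] @ Q"] Cons by simp
  then show ?thesis
    using cyc_edges_Cons_neighbour[of x "P2 @ [v5, v6] @ Q @ [v2, v3]" w] assms C_distinct Cons
    by (auto simp: hd_append b_eq)
qed

lemma C_neighbour_of_a:
  assumes "{a, w} \<in> cyc_edges C"
  shows "w = v2 \<or> w = (if Q = [] then v5 else last (v6 # butlast Q))"
proof (cases Q rule: rev_cases)
  case Nil
  have "cyc_edges C = cyc_edges (v6 # ([v2, v3] @ P @ [v5]))"
    using C_edges cyc_edges_append_commute[of "[v2, v3] @ P @ [v5]" "[v6]"] Nil by simp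
  then show ?thesis
    using cyc_edges_Cons_neighbour[of v6 "[v2, v3] @ P @ [v5]" w] assms C_distinct Nil
      by (auto simp: a_eq)
next
  case (snoc Q1 x)
  have "cyc_edges C = cyc_edges (x # ([v2, v3] @ P @ [v5, v6] @ Q1))"
    using C_edges cyc_edges_append_commute[of "[v2, v3] @ P @ [v5, v6] @ Q1" "[x]"] snoc by simp
  then show ?thesis
    using cyc_edges_Cons_neighbour[of x "[v2, v3] @ P @ [v5, v6] @ Q1" w] assms C_distinct snoc
    by (auto simp: a_eq)
qed

text \<open>The configuration is symmetric under the reflection of f through the midpoints of v2 v3 and
  v5 v6, and under its rotation by three positions.\<close>
lemma reflection: "white_hexagon V E Fs bd C f v4 v3 v2 v1 v6 v5 (rev Q) (rev P) b a"
proof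
  have "[v4, v3, v2, v1, v6, v5] = rotate 2 (rev [v1, v2, v3, v4, v5, v6])"
    by (simp add: rotate_drop_take)
  then show "cyc_edges (bd f) = cyc_edges [v4, v3, v2, v1, v6, v5]"
    using f_edges by (simp only: cyc_edges_rotate cyc_edges_rev)
  have "cyc_edges ([v3, v2] @ rev Q @ [v6, v5] @ rev P)
      = cyc_edges ((rev Q @ [v6, v5] @ rev P) @ [v3, v2])"
    by (rule cyc_edges_append_commute)
  also have "(rev Q @ [v6, v5] @ rev P) @ [v3, v2] = rev ([v2, v3] @ P @ [v5, v6] @ Q)" by simp
  finally show "cyc_edges C = cyc_edges ([v3, v2] @ rev Q @ [v6, v5] @ rev P)"
    using C_edges by (simp only: cyc_edges_rev)
  show "b = last (v5 # rev P)" "a = hd (rev Q @ [v6])"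
    using b_eq a_eq by (auto simp: last_rev hd_append hd_rev)
qed (use fullerene longest f_face f_distinct C_set C_length C_distinct v1_white v4_white in auto)

lemma rotation:
  "white_hexagon V E Fs bd C f v4 v5 v6 v1 v2 v3 Q P (last (v3 # P)) (hd (Q @ [v2]))"
proof
  have "[v4, v5, v6, v1, v2, v3] = rotate 3 [v1, v2, v3, v4, v5, v6]"
    by (simp add: rotate_drop_take)
  then show "cyc_edges (bd f) = cyc_edges [v4, v5, v6, v1, v2, v3]"
    using f_edges by (simp only: cyc_edges_rotate)
  show "cyc_edges C = cyc_edges ([v5, v6] @ Q @ [v2, v3] @ P)"
    using C_edges cyc_edges_append_commute[of "[v2, v3] @ P" "[v5, v6] @ Q"] by simp
qed (use fullerene longest f_face f_distinct C_set C_length C_distinct v1_white v4_white in auto)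

section \<open>The face across v2 v3\<close>

text \<open>Otherwise v1 could be inserted into C between a and v2.\<close>
lemma Q_Nil_if_v1_a_edge:
  assumes "{v1, a} \<in> E"
  shows "Q = []"
proof (rule ccontr)
  assume Q: "Q \<noteq> []"
  let ?D = "[v2, v3] @ P @ [v5, v6] @ Q @ [v1]"
  show False
  proof (rule no_longer_cycle[of ?D])
    show "distinct ?D" using C_distinct v1_white C_set by auto
    have "path_edges ?D = path_edges ([v2, v3] @ P @ [v5, v6] @ Q) \<union> {{last Q, v1}}"
      using path_edges_append[of "[v2, v3] @ P @ [v5, v6] @ Q" "[v1]"] Q by simp
    then show "path_edges ?D \<subseteq> E" using C_path_edges(1) assms Q by (auto simp: a_eq insert_commute)
    show "{last ?D, hd ?D} \<in> E" using f_edges_in_E by simp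
  qed simp
qed

lemma P_Nil_if_v4_b_edge: "{v4, b} \<in> E \<Longrightarrow> P = []"
  using white_hexagon.Q_Nil_if_v1_a_edge[OF reflection] by simp

text \<open>Otherwise v5 would have the four neighbours v4, v6, b and the last vertex of P.\<close>
lemma P_singleton_if_v5_b_edge:
  assumes "{v5, b} \<in> E" "b \<noteq> v5"
  shows "P = [b]"
proof -
  obtain x P2 where P: "P = x # P2" using assms(2) by (cases P) (auto simp: b_eq)
  then have b: "b = x" by (simp add: b_eq)
  have "P2 = []"
  proof (rule ccontr)
    assume "P2 \<noteq> []"
    then have "last P \<noteq> b" using P b C_parts_distinct(10) by (cases P2 rule: rev_cases) auto
    moreover have "last P \<in> set P" using P by simp
    moreover have "{v5, last P} \<in> E" using P_ends(2) P by (simp add: insert_commute)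
    ultimately show False
      using no_four_neighbours[of v5 v4 v6 "last P" b] f_edges_in_E assms P b C_parts_distinct
        v4_notin f_distinct by (auto simp: insert_commute)
  qed
  then show ?thesis using P b by simp
qed

text \<open>The face across v2 v3 cannot be a pentagon v2 v3 b z a.\<close>
lemma pentagon_apex_not_white:
  assumes z: "z \<notin> set C" "z \<noteq> v4" "{b, z} \<in> E" "{z, a} \<in> E"
  shows False
proof (cases "z = v1")
  case True
  then have Q: "Q = []" using Q_Nil_if_v1_a_edge z(4) by (simp add: insert_commute)
  let ?D = "[v1] @ P @ [v5, v4, v3, v2, v6]"
  show False
  proof (rule no_longer_cycle[of ?D])
    show "distinct ?D" using C_parts_distinct v1_notin v4_notin f_distinct by auto
    show "path_edges ?D \<subseteq> E"
      using path_edges_P f_edges_in_E P_ends Q_ends(3) Q z True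
      by (auto simp: path_edges_append path_edges_Cons b_eq insert_commute)
    show "{last ?D, hd ?D} \<in> E" using f_edges_in_E by (auto simp: insert_commute)
  qed (use Q in simp)
next
  case False
  let ?D = "rev Q @ [v6, v1, v2, v3, v4, v5] @ rev P @ [z]"
  have z': "z \<notin> set P" "z \<notin> set Q" "z \<noteq> v2" "z \<noteq> v3" "z \<noteq> v5" "z \<noteq> v6" using z C_set by auto
  show False
  proof (rule no_longer_cycle[of ?D])
    show "distinct ?D" using C_parts_distinct False z z' v1_notin v4_notin f_distinct by auto
    show "path_edges ?D \<subseteq> E"
      using path_edges_P path_edges_Q f_edges_in_E P_ends Q_ends z
      by (auto simp: path_edges_append path_edges_Cons b_eq insert_commute hd_rev last_rev)
    show "{last ?D, hd ?D} \<in> E" using z by (auto simp: a_eq hd_rev insert_commute hd_append)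
  qed simp
qed

lemma pentagon_apex_not_C_neighbour_of_a:
  assumes z: "{b, z} \<in> E" "{z, a} \<in> cyc_edges C" "distinct [v2, v3, b, z, a]"
  shows False
proof (cases Q rule: rev_cases)
  case Nil
  then have "z = v5" using C_neighbour_of_a[of z] z by (auto simp: insert_commute)
  then have "P = [b]" using P_singleton_if_v5_b_edge z by (auto simp: insert_commute)
  then show False using length_C_ge_6 Nil by simp
next
  case (snoc Q1 x)
  then have a: "a = x" by (simp add: a_eq)
  have zQ: "z = last (v6 # Q1)" using C_neighbour_of_a[of z] z snoc a by (auto simp: insert_commute)
  have pQ1: "path_edges Q1 \<subseteq> E" using path_edges_Q snoc by (auto simp: path_edges_append)
  have hQ1: "Q1 \<noteq> [] \<Longrightarrow> {v6, hd Q1} \<in> E" using Q_ends(1) snoc by auto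
  let ?D = "[v6, v1, v2, v3, v4, v5] @ rev P @ rev Q1"
  show False
  proof (rule no_longer_cycle[of ?D])
    show "distinct ?D" using C_parts_distinct snoc f_distinct v1_notin v4_notin by auto
    show "path_edges ?D \<subseteq> E"
      using path_edges_P pQ1 f_edges_in_E P_ends hQ1 z(1) zQ
      by (cases "P = []"; cases "Q1 = []")
        (auto simp: path_edges_append path_edges_Cons b_eq insert_commute hd_rev last_rev)
    show "{last ?D, hd ?D} \<in> E"
      using hQ1 z(1) zQ P_ends(3)
        by (cases "Q1 = []"; cases "P = []") (auto simp: b_eq insert_commute last_rev)
  qed (use snoc in simp)
qed

lemma no_pentagon_across_v2v3:
  assumes "{b, z} \<in> E" "{z, a} \<in> E" "distinct [v2, v3, b, z, a]"
  shows False
proof -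
  interpret reflected: white_hexagon V E Fs bd C f v4 v3 v2 v1 v6 v5 "rev Q" "rev P" b a
    by (rule reflection)
  consider "z \<notin> set C" "z \<noteq> v4" | "z = v4" | "{z, a} \<in> cyc_edges C" | "{z, b} \<in> cyc_edges C"
    using at_most_one_chord[of z a b] assms f_distinct on_C(2) v4_white
      by (fastforce simp: insert_commute)
  then show False
  proof cases
    case 1
    then show False using pentagon_apex_not_white assms by blast
  next
    case 2
    then show False
      using reflected.pentagon_apex_not_white[of z] assms v4_white f_distinct
        by (auto simp: insert_commute)
  next
    case 3
    then show False using pentagon_apex_not_C_neighbour_of_a assms by blast
  next
    case 4
    then show False using reflected.pentagon_apex_not_C_neighbour_of_a[of z] assms
      by (auto simp: insert_commute)
  qed
qed

text \<open>If the face across v2 v3 is a hexagon v2 v3 b y z a, then z lies on C (and, by reflection,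
  so does y).\<close>
lemma hexagon_z_v4:
  assumes H: "{b, y} \<in> E" "{y, v4} \<in> E" "{v4, a} \<in> E" "distinct [v2, v3, b, y, v4, a]"
  shows False
proof -
  have "a \<noteq> v3" "a \<noteq> v5" using a_on_C C_parts_distinct f_distinct by auto
  have "y = v5"
  proof (rule ccontr)
    assume "y \<noteq> v5"
    then have "distinct [v3, v5, a, y]" using H f_distinct \<open>a \<noteq> v3\<close> \<open>a \<noteq> v5\<close> by auto
    then show False using no_four_neighbours[of v4 v3 v5 a y] f_edges_in_E H
      by (auto simp: insert_commute)
  qed
  then have P: "P = [b]" using P_singleton_if_v5_b_edge H by (auto simp: insert_commute)
  let ?D = "[v4, v5, b, v3, v2, v1, v6] @ Q"
  show False
  proof (rule no_longer_cycle[of ?D])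
    show "distinct ?D" using C_parts_distinct v1_notin v4_notin f_distinct P by auto
    show "path_edges ?D \<subseteq> E" using path_edges_Q f_edges_in_E v3_b_edge Q_ends H \<open>y = v5\<close>
      by (cases "Q = []") (auto simp: path_edges_append path_edges_Cons insert_commute)
    show "{last ?D, hd ?D} \<in> E" using H Q_ends by (cases "Q = []") (auto simp: a_eq insert_commute)
  qed (use P in simp)
qed

lemma hexagon_z_v1:
  assumes H: "{b, y} \<in> E" "{y, v1} \<in> E" "{v1, a} \<in> E" "distinct [v2, v3, b, y, v1, a]"
  shows False
proof -
  have Q: "Q = []" using Q_Nil_if_v1_a_edge H(3) .
  consider "y \<notin> set C" "y \<noteq> v4" | "y = v4" | "y \<in> set C" by blast
  then show False
  proof cases
    case 1
    let ?D = "[v1, y] @ P @ [v5, v4, v3, v2, v6]"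
    have y: "y \<notin> set P" "y \<noteq> v2" "y \<noteq> v3" "y \<noteq> v5" "y \<noteq> v6" using 1 C_set by auto
    show False
    proof (rule no_longer_cycle[of ?D])
      show "distinct ?D" using C_parts_distinct 1 y H v1_notin v4_notin f_distinct by auto
      show "path_edges ?D \<subseteq> E" using path_edges_P f_edges_in_E P_ends Q_ends H Q
        by (cases "P = []") (auto simp: path_edges_append path_edges_Cons b_eq insert_commute)
      show "{last ?D, hd ?D} \<in> E" using f_edges_in_E by (simp add: insert_commute)
    qed (use Q in simp)
  next
    case 2
    then have "P = []" using P_Nil_if_v4_b_edge H(1) by (simp add: insert_commute)
    then show False using length_C_ge_6 Q by simp
  next
    case 3
    have "{y, b} \<in> cyc_edges C"
      using C_edge_if_white_neighbour[of y v1 b] H 3 v1_white by (auto simp: insert_commute)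
    then have y: "y = (if P = [] then v6 else hd (tl P @ [v5]))"
      using C_neighbour_of_b[of y] H by (auto simp: insert_commute)
    then obtain x P2 where P: "P = x # P2" using H Q by (cases P) (auto simp: a_eq)
    have "path_edges P2 \<subseteq> E" using path_edges_P P by (auto simp: path_edges_Cons split: if_splits)
    moreover have "P2 \<noteq> [] \<Longrightarrow> {last P2, v5} \<in> E" using P_ends(2) P by auto
    moreover have "{hd (P2 @ [v5]), v1} \<in> E" using H y P by (simp add: insert_commute)
    ultimately have "path_edges ([v1] @ P2 @ [v5, v4, v3, v2, v6]) \<subseteq> E"
      using f_edges_in_E Q_ends(3) Q
      by (cases "P2 = []") (auto simp: path_edges_append path_edges_Cons insert_commute)
    then show False
      using no_longer_cycle[of "[v1] @ P2 @ [v5, v4, v3, v2, v6]"] C_parts_distinct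
        v1_notin v4_notin
        f_distinct f_edges_in_E P Q by (auto simp: insert_commute)
  qed
qed

lemma hexagon_white_z_white_y:
  assumes H: "{b, y} \<in> E" "{y, z} \<in> E" "{z, a} \<in> E" "distinct [v2, v3, b, y, z, a]"
    and z: "z \<notin> set C" "z \<noteq> v1" "z \<noteq> v4" and y: "y \<notin> set C"
  shows False
proof -
  have z': "z \<notin> set P" "z \<notin> set Q" "z \<noteq> v2" "z \<noteq> v3" "z \<noteq> v5" "z \<noteq> v6"
    and y': "y \<notin> set P" "y \<notin> set Q" "y \<noteq> v2" "y \<noteq> v3" "y \<noteq> v5" "y \<noteq> v6"
    using z y C_set by auto
  consider "y = v1" | "y = v4" | "y \<noteq> v1" "y \<noteq> v4" by blast
  then show False
  proof cases
    case 1
    have "b \<noteq> v6" using b_on_C C_parts_distinct f_distinct by auto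
    then show False
      using no_four_neighbours[of v1 v2 v6 b z] f_edges_in_E f_distinct H 1 z'
      by (auto simp: insert_commute)
  next
    case 2
    then have P: "P = []" using P_Nil_if_v4_b_edge H(1) by (simp add: insert_commute)
    let ?D = "[v5, v4, z] @ rev Q @ [v6, v1, v2, v3]"
    show False
    proof (rule no_longer_cycle[of ?D])
      show "distinct ?D" using C_parts_distinct z z' v1_notin v4_notin f_distinct by auto
      show "path_edges ?D \<subseteq> E" using path_edges_Q f_edges_in_E Q_ends H 2
        by (cases "Q = []")
          (auto simp: path_edges_append path_edges_Cons a_eq insert_commute hd_rev last_rev)
      show "{last ?D, hd ?D} \<in> E" using P_ends(3) P by (simp add: insert_commute)
    qed (use P in simp)
  next
    case 3
    let ?D = "rev Q @ [v6, v1, v2, v3, v4, v5] @ rev P @ [y, z]"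
    show False
    proof (rule no_longer_cycle[of ?D])
      show "distinct ?D" using C_parts_distinct z z' y' 3 H v1_notin v4_notin f_distinct by auto
      show "path_edges ?D \<subseteq> E" using path_edges_P path_edges_Q f_edges_in_E P_ends Q_ends H
        by (cases "P = []")
          (auto simp: path_edges_append path_edges_Cons b_eq insert_commute hd_rev last_rev)
      show "{last ?D, hd ?D} \<in> E" using H
        by (cases "Q = []") (auto simp: a_eq hd_rev insert_commute hd_append)
    qed simp
  qed
qed

lemma hexagon_white_z_black_y:
  assumes H: "{b, y} \<in> E" "{y, z} \<in> E" "{z, a} \<in> E" "distinct [v2, v3, b, y, z, a]"
    and z: "z \<notin> set C" "z \<noteq> v1" "z \<noteq> v4" and y: "y \<in> set C"
  shows False
proof -
  have z': "z \<notin> set P" "z \<notin> set Q" "z \<noteq> v2" "z \<noteq> v3" "z \<noteq> v5" "z \<noteq> v6"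
    using z C_set by auto
  have "{y, b} \<in> cyc_edges C"
    using C_edge_if_white_neighbour[of y z b] H z y by (auto simp: insert_commute)
  then have y_eq: "y = (if P = [] then v6 else hd (tl P @ [v5]))"
    using C_neighbour_of_b[of y] H by (auto simp: insert_commute)
  show False
  proof (cases P)
    case Nil
    define d where "d = hd (Q @ [v2])"
    have "{v6, d} \<in> E" using Q_ends by (cases "Q = []") (auto simp: d_def)
    moreover have "d \<in> set Q \<or> d = v2" unfolding d_def by (cases Q) auto
    then have "distinct [v5, v1, d, z]" using f_distinct C_parts_distinct v1_notin z z' by auto
    ultimately show False
      using no_four_neighbours[of v6 v5 v1 d z] f_edges_in_E H y_eq Nil
        by (auto simp: insert_commute)
  next
    case (Cons x P2)
    have "path_edges P2 \<subseteq> E" using path_edges_P Cons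
      by (auto simp: path_edges_Cons split: if_splits)
    moreover have "P2 \<noteq> [] \<Longrightarrow> {last P2, v5} \<in> E" using P_ends(2) Cons by auto
    moreover have "{hd (P2 @ [v5]), z} \<in> E" using H y_eq Cons by simp
    ultimately have "path_edges ([v6, v1, v2, v3, v4, v5] @ rev P2 @ [z] @ rev Q) \<subseteq> E"
      using path_edges_Q f_edges_in_E Q_ends H
      by (cases "P2 = []"; cases "Q = []")
        (auto simp: path_edges_append path_edges_Cons a_eq insert_commute hd_rev last_rev)
    moreover have "{last ([v6, v1, v2, v3, v4, v5] @ rev P2 @ [z] @ rev Q), v6} \<in> E"
      using H Q_ends by (cases "Q = []") (auto simp: a_eq insert_commute last_rev)
    ultimately show False
      using no_longer_cycle[of "[v6, v1, v2, v3, v4, v5] @ rev P2 @ [z] @ rev Q"] C_parts_distinct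
        z z' v1_notin v4_notin f_distinct Cons by auto
  qed
qed

lemma hexagon_z_on_C:
  assumes "{b, y} \<in> E" "{y, z} \<in> E" "{z, a} \<in> E" "distinct [v2, v3, b, y, z, a]"
  shows "z \<in> set C"
proof (rule ccontr)
  assume "z \<notin> set C"
  then consider "z = v1" | "z = v4" | "z \<noteq> v1" "z \<noteq> v4" "y \<notin> set C" | "z \<noteq> v1" "z \<noteq> v4" "y \<in> set C"
    by blast
  then show False
    using hexagon_z_v1[of y] hexagon_z_v4[of y] hexagon_white_z_white_y[of y z]
      hexagon_white_z_black_y[of y z] assms \<open>z \<notin> set C\<close> by cases blast+
qed

lemma f_cyc_edges: "{v1, v2} \<in> cyc_edges (bd f)" "{v2, v3} \<in> cyc_edges (bd f)"
  "{v3, v4} \<in> cyc_edges (bd f)" "{v4, v5} \<in> cyc_edges (bd f)" "{v5, v6} \<in> cyc_edges (bd f)"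
  "{v6, v1} \<in> cyc_edges (bd f)"
  using f_edges by (auto simp: cyc_edges_conv_path_edges)

lemma face_across_v2v3_neighbour_of_v2:
  assumes "h \<in> Fs" "h \<noteq> f" "{v2, v3} \<in> cyc_edges (bd h)" "{v2, w} \<in> cyc_edges (bd h)" "w \<noteq> v3"
  shows "w = a"
proof (rule plane_embedding_third_edge_at_vertex[OF embedding f_face assms(1) assms(2)[symmetric]])
  have "a \<noteq> v1" "a \<noteq> v3" using a_on_C C_parts_distinct f_distinct v1_notin by auto
  then show "distinct [v1, v3, a]" using f_distinct by simp
  show "{v2, v1} \<in> E" "{v2, v3} \<in> E" "{v2, a} \<in> E"
    using f_edges_in_E a_v2_edge by (auto simp: insert_commute)
  show "x \<in> {v1, v3, a}" if "{v2, x} \<in> E" for x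
    using no_four_neighbours[OF \<open>{v2, v1} \<in> E\<close> \<open>{v2, v3} \<in> E\<close> \<open>{v2, a} \<in> E\<close> that]
      \<open>distinct [v1, v3, a]\<close> by auto
  show "{v2, v1} \<in> cyc_edges (bd f)" "{v2, v3} \<in> cyc_edges (bd f)"
    using f_cyc_edges by (auto simp: insert_commute)
qed (use assms in auto)

lemma face_across_v2v3_neighbour_of_v3:
  assumes "h \<in> Fs" "h \<noteq> f" "{v2, v3} \<in> cyc_edges (bd h)" "{v3, w} \<in> cyc_edges (bd h)" "w \<noteq> v2"
  shows "w = b"
  using white_hexagon.face_across_v2v3_neighbour_of_v2[OF reflection, of h w] assms
  by (auto simp: insert_commute)

lemma face_across_v2v3_black_hexagon:
  assumes h: "h \<in> Fs" "h \<noteq> f" "{v2, v3} \<in> cyc_edges (bd h)"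
  shows "length (bd h) = 6" "set (bd h) \<subseteq> set C"
proof -
  interpret reflected: white_hexagon V E Fs bd C f v4 v3 v2 v1 v6 v5 "rev Q" "rev P" b a
    by (rule reflection)
  have "is_cycle V E (bd h)" using plane_embedding_face_is_cycle[OF embedding h(1)] .
  then obtain R where R: "cyc_edges (v2 # v3 # R) = cyc_edges (bd h)"
    "set (v2 # v3 # R) = set (bd h)"
    "length (v2 # v3 # R) = length (bd h)" "distinct (v2 # v3 # R)"
    using cyc_edges_rotate_to_edge[of "bd h" v2 v3] h(3) f_distinct by (auto simp: is_cycle_def)
  have len: "length R = 3 \<or> length R = 4"
    using fullerene h(1) R(3) by (auto simp: fullerene_def)
  then have "R \<noteq> []" by auto
  then have "{v3, hd R} \<in> cyc_edges (bd h)" "{v2, last R} \<in> cyc_edges (bd h)"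
    using R(1) by (auto simp: cyc_edges_conv_path_edges path_edges_Cons insert_commute)
  moreover have "hd R \<noteq> v2" "last R \<noteq> v3" using R(4) \<open>R \<noteq> []\<close> by (auto dest: last_in_set)
  ultimately have ends: "hd R = b" "last R = a"
    using face_across_v2v3_neighbour_of_v2 face_across_v2v3_neighbour_of_v3 h by auto
  have inE: "e \<in> cyc_edges (v2 # v3 # R) \<Longrightarrow> e \<in> E" for e
    using plane_embedding_face_edge_in_E[OF embedding h(1)] R(1) by auto
  obtain y z where R_eq: "R = [b, y, z, a]"
  proof (cases "length R = 3")
    case True
    then obtain z where "R = [b, z, a]" using ends by (auto simp: numeral_3_eq_3 length_Suc_conv)
    then show thesis
      using no_pentagon_across_v2v3[of z] inE[of "{b, z}"] inE[of "{z, a}"] R(4)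
      by (auto simp: cyc_edges_conv_path_edges)
  next
    case False
    then show thesis using that len ends by (auto simp: numeral_eq_Suc length_Suc_conv)
  qed
  then have "{b, y} \<in> E" "{y, z} \<in> E" "{z, a} \<in> E" "distinct [v2, v3, b, y, z, a]"
    using inE R(4) by (auto simp: cyc_edges_conv_path_edges)
  then have "z \<in> set C" "y \<in> set C"
    using hexagon_z_on_C reflected.hexagon_z_on_C[of z y] by (auto simp: insert_commute)
  then show "length (bd h) = 6" "set (bd h) \<subseteq> set C"
    using R(2,3) R_eq on_C by auto
qed

lemma transfer_across_v2v3:
  assumes h: "h \<in> Fs" "h \<noteq> f" and e: "face_edge bd h i = {v2, v3}" and white: "white_face bd C f"
  shows "transfer Fs bd C h i = 1/2"
proof -
  have ne: "bd h \<noteq> []" "distinct (bd h)"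
    using plane_embedding_face_is_cycle[OF embedding h(1)] by (auto simp: is_cycle_def)
  then have "{v2, v3} \<in> cyc_edges (bd h)" using face_edge_in_cyc_edges[of bd h i] e by simp
  then have hex: "length (bd h) = 6" "set (bd h) \<subseteq> set C" using face_across_v2v3_black_hexagon h
    by auto
  then have black: "black_face bd C h" by (auto simp: black_face_def n_white_def)
  have nbr: "nbr_face Fs bd h i = f"
    using nbr_face_eqI[OF embedding h(1) f_face h(2)[symmetric]] e f_cyc_edges(2) by simp
  define x u w y where "x = vtx bd h (i - 1)" and "u = vtx bd h i" and "w = vtx bd h (i + 1)"
    and "y = vtx bd h (i + 2)"
  have vtx6: "vtx bd h j = vtx bd h k \<longleftrightarrow> j mod 6 = k mod 6" for j k
    using vtx_eq_iff[of bd h, OF ne(2,1)] hex(1) by simp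
  \<comment> \<open>x u w y is a path in the hexagon h, so x and y are the other neighbours of u and w in h\<close>
  have "x \<noteq> w" "u \<noteq> y" unfolding x_def u_def w_def y_def vtx6 by presburger+
  moreover have "{u, x} \<in> cyc_edges (bd h)" "{w, y} \<in> cyc_edges (bd h)"
    using face_edge_in_cyc_edges[of bd h "i - 1", OF ne(1)]
      face_edge_in_cyc_edges[of bd h "i + 1", OF ne(1)]
    by (simp_all add: x_def u_def w_def y_def add.assoc insert_commute)
  moreover have "u = v2 \<and> w = v3 \<or> u = v3 \<and> w = v2"
    using e by (auto simp: x_def u_def w_def y_def doubleton_eq_iff)
  ultimately have "{x, u} = {a, v2} \<and> {w, y} = {v3, b} \<or> {x, u} = {b, v3} \<and> {w, y} = {v2, a}"
    using face_across_v2v3_neighbour_of_v2[OF h \<open>{v2, v3} \<in> cyc_edges (bd h)\<close>]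
      face_across_v2v3_neighbour_of_v3[OF h \<open>{v2, v3} \<in> cyc_edges (bd h)\<close>] by fastforce
  then have "in_C C x u \<and> in_C C u w \<and> in_C C w y"
    using e C_edges_at_v2v3 by (auto simp: in_C_def x_def u_def w_def y_def insert_commute)
  then show ?thesis using hex black nbr white by (simp add: transfer_def x_def u_def w_def y_def)
qed

lemma black_face_across_edge_of_f:
  assumes h: "h \<in> Fs" "black_face bd C h" "nbr_face Fs bd h i = f"
  shows "h \<noteq> f \<and> face_edge bd h i \<in> {{v2, v3}, {v5, v6}}"
proof -
  have "card {v \<in> set (bd h). v \<notin> set C} = 0" using h(2) by (simp add: black_face_def n_white_def)
  then have "set (bd h) \<subseteq> set C" by auto
  moreover have "bd h \<noteq> []"
    using plane_embedding_face_is_cycle[OF embedding h(1)] by (auto simp: is_cycle_def)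
  ultimately have "vtx bd h i \<in> set C" "vtx bd h (i + 1) \<in> set C"
    using vtx_in_set[of bd h] by auto
  then have "v1 \<notin> face_edge bd h i" "v4 \<notin> face_edge bd h i" using v1_white v4_white by auto
  moreover have "face_edge bd h i \<in> cyc_edges [v1, v2, v3, v4, v5, v6]" "h \<noteq> f"
    using nbr_face_spec[OF embedding h(1), of i] h(3) f_edges by auto
  moreover from this(1) have
    "face_edge bd h i \<in> {{v1, v2}, {v2, v3}, {v3, v4}, {v4, v5}, {v5, v6}, {v6, v1}}"
    by (simp add: cyc_edges_conv_path_edges insert_commute)
  ultimately show ?thesis by blast
qed

lemma charge_sent_by_f_to_face:
  assumes white: "white_face bd C f" and h: "h \<in> Fs"
  shows "(if nbr_face Fs bd h i = f then transfer Fs bd C h i else 0)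
    = (if h \<noteq> f \<and> face_edge bd h i = {v2, v3} then 1/2 else 0)
      + (if h \<noteq> f \<and> face_edge bd h i = {v5, v6} then 1/2 else 0)"
proof -
  interpret rotated:
    white_hexagon V E Fs bd C f v4 v5 v6 v1 v2 v3 Q P "last (v3 # P)" "hd (Q @ [v2])"
    by (rule rotation)
  have "{v2, v3} \<noteq> {v5, v6}" using f_distinct by (auto simp: doubleton_eq_iff)
  have nbr: "nbr_face Fs bd h i = f" if "h \<noteq> f" "face_edge bd h i \<in> cyc_edges (bd f)"
    using nbr_face_eqI[OF embedding h f_face] that by simp
  consider "h \<noteq> f" "face_edge bd h i = {v2, v3}" | "h \<noteq> f" "face_edge bd h i = {v5, v6}"
    | "\<not> (h \<noteq> f \<and> face_edge bd h i \<in> {{v2, v3}, {v5, v6}})" by blast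
  then show ?thesis
  proof cases
    case 1
    moreover have "nbr_face Fs bd h i = f" using nbr 1 f_cyc_edges(2) by simp
    moreover have "transfer Fs bd C h i = 1/2" by (rule transfer_across_v2v3[OF h 1 white])
    ultimately show ?thesis using \<open>{v2, v3} \<noteq> {v5, v6}\<close> by simp
  next
    case 2
    moreover have "nbr_face Fs bd h i = f" using nbr 2 f_cyc_edges(5) by simp
    moreover have "transfer Fs bd C h i = 1/2" by (rule rotated.transfer_across_v2v3[OF h 2 white])
    ultimately show ?thesis using \<open>{v2, v3} \<noteq> {v5, v6}\<close> by simp
  next
    case 3
    have "transfer Fs bd C h i = 0" if "nbr_face Fs bd h i = f"
    proof (cases "black_face bd C h")
      case False
      then show ?thesis by (simp add: transfer_def)
    next
      case True
      then show ?thesis using black_face_across_edge_of_f[OF h True that] 3 by blast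
    qed
    moreover have "\<not> (h \<noteq> f \<and> face_edge bd h i = {v2, v3})"
      "\<not> (h \<noteq> f \<and> face_edge bd h i = {v5, v6})"
      using 3 by auto
    ultimately show ?thesis by (cases "nbr_face Fs bd h i = f") simp_all
  qed
qed

lemma charge_sent_by_f:
  assumes white: "white_face bd C f"
  shows "(\<Sum>h\<in>Fs. \<Sum>i\<in>{0..<6}. if nbr_face Fs bd h i = f then transfer Fs bd C h i else 0) = 1"
proof -
  interpret rotated:
    white_hexagon V E Fs bd C f v4 v5 v6 v1 v2 v3 Q P "last (v3 # P)" "hd (Q @ [v2])"
    by (rule rotation)
  have "(\<Sum>h\<in>Fs. \<Sum>i\<in>{0..<6::int}. if h \<noteq> f \<and> face_edge bd h i = {v2, v3} then 1/2 else 0)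
      = (1/2 :: real)"
    using face_across_v2v3_black_hexagon(1)
      by (rule sum_face_edge_indicator[OF embedding f_face f_cyc_edges(2)])
  moreover have "(\<Sum>h\<in>Fs. \<Sum>i\<in>{0..<6::int}. if h \<noteq> f \<and> face_edge bd h i = {v5, v6} then 1/2 else 0)
      = (1/2 :: real)"
    using rotated.face_across_v2v3_black_hexagon(1)
    by (rule sum_face_edge_indicator[OF embedding f_face f_cyc_edges(5)])
  ultimately have "(\<Sum>h\<in>Fs. \<Sum>i\<in>{0..<6}. if nbr_face Fs bd h i = f then transfer Fs bd C h i else 0)
      = 1/2 + 1/2"
    using charge_sent_by_f_to_face[OF white] by (simp add: sum.distrib)
  then show ?thesis by simp
qed

end

lemma white_vertices_of_white_face:
  assumes "white_face bd C f" "set (bd f) = {v1, v2, v3, v4, v5, v6}"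
    "v2 \<in> set C" "v3 \<in> set C" "v5 \<in> set C" "v6 \<in> set C"
  shows "v1 \<notin> set C" "v4 \<notin> set C"
proof -
  let ?S = "{v \<in> set (bd f). v \<notin> set C}"
  have "?S \<subseteq> {v1, v4}" using assms(2-6) by auto
  moreover have "card {v1, v4} \<le> card ?S"
    using assms(1) by (cases "v1 = v4") (simp_all add: white_face_def n_white_def)
  ultimately have "?S = {v1, v4}" by (intro card_seteq) simp_all
  then show "v1 \<notin> set C" "v4 \<notin> set C" by auto
qed

lemma white_hexagon_exists:
  assumes fullerene: "fullerene V E Fs bd" and longest: "longest_cycle V E C" and f: "f \<in> Fs"
    and white: "white_face bd C f" and labelling: "cyclic_labelling (bd f) [v1, v2, v3, v4, v5, v6]"
    and on_C: "in_C C v2 v3" "in_C C v5 v6"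
  obtains P Q
  where "white_hexagon V E Fs bd C f v1 v2 v3 v4 v5 v6 P Q (last (v6 # Q)) (hd (P @ [v5]))"
proof -
  have simple: "simple_graph V E" and embedding: "plane_embedding V E Fs bd"
    using fullerene by (simp_all add: fullerene_def)
  have "distinct (bd f)"
    using plane_embedding_face_is_cycle[OF embedding f] by (simp add: is_cycle_def)
  then have f_edges: "cyc_edges (bd f) = cyc_edges [v1, v2, v3, v4, v5, v6]"
    and f_set: "set (bd f) = {v1, v2, v3, v4, v5, v6}"
    and f_distinct: "distinct [v1, v2, v3, v4, v5, v6]"
    using cyclic_labelling_cycle[OF _ labelling] by auto
  have C_edges: "{v2, v3} \<in> cyc_edges C" "{v5, v6} \<in> cyc_edges C"
    using on_C by (simp_all add: in_C_def)
  then have "v2 \<in> set C" "v3 \<in> set C" "v5 \<in> set C" "v6 \<in> set C"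
    using cyc_edges_memD[OF C_edges(1)] cyc_edges_memD[OF C_edges(2)] by simp_all
  then have white_vertices: "v1 \<notin> set C" "v4 \<notin> set C"
    using white_vertices_of_white_face[OF white f_set] by blast+
  have "{v1, v2} \<in> E" "{v3, v4} \<in> E" "{v4, v5} \<in> E" "{v6, v1} \<in> E"
    using plane_embedding_face_edge_in_E[OF embedding f] f_edges
    by (auto simp: cyc_edges_conv_path_edges)
  have "distinct C" "3 \<le> length C" using longest by (auto simp: longest_cycle_def is_cycle_def)
  moreover have "distinct [v2, v3, v5, v6]" using f_distinct by simp
  ultimately obtain A B x y where xy: "(x, y) = (v5, v6) \<or> (x, y) = (v6, v5)"
    and C: "cyc_edges C = cyc_edges ([v2, v3] @ A @ [x, y] @ B)"
      "set C = set ([v2, v3] @ A @ [x, y] @ B)"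
      "length C = length ([v2, v3] @ A @ [x, y] @ B)" "distinct ([v2, v3] @ A @ [x, y] @ B)"
    using C_edges by (rule cycle_through_two_edges)
  have "(x, y) = (v5, v6)"
  proof (rule ccontr)
    assume "(x, y) \<noteq> (v5, v6)"
    then have "x = v6" "y = v5" using xy by auto
    note C' = C[unfolded this]
    show False
      by (rule longest_cycle_orientation[OF simple longest C'(1,3,4,2) white_vertices])
        (use f_distinct \<open>{v1, v2} \<in> E\<close> \<open>{v3, v4} \<in> E\<close> \<open>{v4, v5} \<in> E\<close>
          \<open>{v6, v1} \<in> E\<close> in \<open>auto simp: insert_commute\<close>)
  qed
  then show thesis
    using that[of A B] fullerene longest f f_edges f_distinct C white_vertices
      by (simp add: white_hexagon_def)
qed

theorem lemma3:
  fixes V :: "'v set" and E :: "'v set set" and Fs :: "'f set" and bd :: "'f \<Rightarrow> 'v list"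
    and C :: "'v list" and f :: 'f and v1 v2 v3 v4 v5 v6 :: 'v
  assumes "fullerene V E Fs bd"
    and "longest_cycle V E C"
    and "f \<in> Fs"
    and "white_face bd C f"
    and "cyclic_labelling (bd f) [v1, v2, v3, v4, v5, v6]"
    and "in_C C v2 v3" and "in_C C v5 v6"
  shows "final_charge Fs bd C f = 1"
proof -
  obtain P Q
    where "white_hexagon V E Fs bd C f v1 v2 v3 v4 v5 v6 P Q (last (v6 # Q)) (hd (P @ [v5]))"
    using white_hexagon_exists assms by metis
  then interpret white_hexagon V E Fs bd C f v1 v2 v3 v4 v5 v6 P Q "last (v6 # Q)" "hd (P @ [v5])" .
  have "transfer Fs bd C f i = 0" for i
    using \<open>white_face bd C f\<close> by (simp add: transfer_def white_face_def black_face_def)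
  then show ?thesis
    using charge_sent_by_f \<open>white_face bd C f\<close> by (simp add: final_charge_def white_face_def)
qed
end
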